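(* If $c\in SO(\mathbb{R}_+)$ and $\alpha\in SOS(\mathbb{R}_+)$, then $c\circ\alpha\in SO(\mathbb{R}_+)$, $c-c\circ\alpha\in C_b(\mathbb{R}_+)$, and $\lim_{t\to s}\big(c(t)-c(\alpha(t))\big)=0$ for $s\in\{0,\infty\}$.
   Context: $\mathbb{R}_+=(0,\infty)$. $C_b(\mathbb{R}_+)$: bounded continuous complex functions on $\mathbb{R}_+$. $SO(\mathbb{R}_+)$ is the set of $f\in C_b(\mathbb{R}_+)$ with $\lim_{r\to s}\sup\{|f(t)-f(\tau)|:t,\tau\in[\lambda r,r]\}=0$ for $s\in\{0,\infty\}$ and each (equivalently some) $\lambda\in(0,1)$. $SOS(\mathbb{R}_+)$ is the set of orientation-preserving diffeomorphisms $\alpha$ of $\mathbb{R}_+$ onto itself with no fixed points in $\mathbb{R}_+$ such that $\log\alpha'\in C_b(\mathbb{R}_+)$ and $\alpha'\in SO(\mathbb{R}_+)$. *)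

theory Defs
  imports "HOL-Analysis.Analysis"
begin

text \<open>Functions on the positive half-line R+ = (0,inf) are modelled as total functions
  real => complex; only their values on {0<..} matter.\<close>

definition Cb :: "(real \<Rightarrow> complex) \<Rightarrow> bool" where
  "Cb f \<longleftrightarrow> continuous_on {0<..} f \<and> bounded (f ` {0<..})"

definition osc :: "(real \<Rightarrow> complex) \<Rightarrow> real \<Rightarrow> real \<Rightarrow> real" where
  "osc f lam r = (SUP p\<in>{lam*r..r} \<times> {lam*r..r}. cmod (f (fst p) - f (snd p)))"

definition SO :: "(real \<Rightarrow> complex) \<Rightarrow> bool" where
  "SO f \<longleftrightarrow> Cb f \<and>
     (\<forall>lam. 0 < lam \<and> lam < 1 \<longrightarrow>
        ((\<lambda>r. osc f lam r) \<longlongrightarrow> 0) (at_right 0) \<and>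
        ((\<lambda>r. osc f lam r) \<longlongrightarrow> 0) at_top)"

definition SOS :: "(real \<Rightarrow> real) \<Rightarrow> bool" where
  "SOS \<alpha> \<longleftrightarrow>
     bij_betw \<alpha> {0<..} {0<..} \<and>
     strict_mono_on {0<..} \<alpha> \<and>
     (\<forall>t>0. \<alpha> differentiable (at t)) \<and>
     continuous_on {0<..} (deriv \<alpha>) \<and>
     (\<forall>t>0. inv_into {0<..} \<alpha> differentiable (at t)) \<and>
     (\<forall>t>0. \<alpha> t \<noteq> t) \<and>
     Cb (\<lambda>t. complex_of_real (ln (deriv \<alpha> t))) \<and>
     SO (\<lambda>t. complex_of_real (deriv \<alpha> t))"

end

theory Submission
  imports Defs
begin

text \<open>Since \<open>\<alpha>'\<close> is bounded above and away from zero, \<open>\<alpha>\<close> is comparable with the identity: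
  \<open>m t \<le> \<alpha>(t) \<le> M t\<close>. Slow oscillation of \<open>c\<close> means that, near \<open>0\<close> and near \<open>\<infinity>\<close>, \<open>c\<close> varies
  little on every dilated segment \<open>[a r, b r]\<close> with \<open>0 < a < b\<close>, not only on \<open>[\<lambda> r, r]\<close>. Hence
  \<open>c \<circ> \<alpha>\<close> varies little on \<open>[\<lambda> r, r]\<close>, since \<open>\<alpha>\<close> maps it into \<open>[m\<lambda> r, M r]\<close>, and
  \<open>c(t) - c(\<alpha>(t))\<close> is small, since \<open>t\<close> and \<open>\<alpha>(t)\<close> both lie in \<open>[a t, b t]\<close> for suitable
  fixed \<open>a, b\<close>.\<close>

definition vanishing_oscillation :: "real filter \<Rightarrow> (real \<Rightarrow> complex) \<Rightarrow> real \<Rightarrow> real \<Rightarrow> bool" where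
  "vanishing_oscillation F f a b \<longleftrightarrow>
     (\<forall>e>0. eventually (\<lambda>r. \<forall>t\<in>{a*r..b*r}. \<forall>s\<in>{a*r..b*r}. cmod (f t - f s) < e) F)"

lemma osc_upper:
  assumes "bounded (f ` {0<..})" and "0 < lam*r" and "t \<in> {lam*r..r}" and "s \<in> {lam*r..r}"
  shows "cmod (f t - f s) \<le> osc f lam r"
proof -
  let ?g = "\<lambda>p. cmod (f (fst p) - f (snd p))" and ?A = "{lam*r..r} \<times> {lam*r..r}"
  obtain K where K: "\<And>x. x > 0 \<Longrightarrow> cmod (f x) \<le> K"
    using assms(1) unfolding bounded_iff by auto
  have "bdd_above (?g ` ?A)"
  proof (rule bdd_aboveI2)
    fix p assume "p \<in> ?A"
    then have "cmod (f (fst p)) \<le> K" "cmod (f (snd p)) \<le> K"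
      using assms(2) K by (auto simp: mem_Times_iff)
    then show "?g p \<le> 2*K"
      using norm_triangle_ineq4[of "f (fst p)" "f (snd p)"] by linarith
  qed
  moreover have "(t, s) \<in> ?A" using assms(3,4) by simp
  ultimately have "?g (t, s) \<le> Sup (?g ` ?A)" by (rule cSUP_upper[rotated])
  then show ?thesis unfolding osc_def by simp
qed

lemma osc_leI:
  assumes "lam*r \<le> r" and "\<And>t s. t \<in> {lam*r..r} \<Longrightarrow> s \<in> {lam*r..r} \<Longrightarrow> cmod (f t - f s) \<le> e"
  shows "osc f lam r \<le> e"
  unfolding osc_def using assms by (intro cSUP_least) (auto simp: mem_Times_iff)

lemma tendsto_osc_zero_iff_vanishing_oscillation:
  assumes "bounded (f ` {0<..})" and "0 < lam" and "lam < 1" and pos: "eventually (\<lambda>r. r > 0) F"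
  shows "((\<lambda>r. osc f lam r) \<longlongrightarrow> 0) F \<longleftrightarrow> vanishing_oscillation F f lam 1"
proof
  assume lim: "((\<lambda>r. osc f lam r) \<longlongrightarrow> 0) F"
  show "vanishing_oscillation F f lam 1"
    unfolding vanishing_oscillation_def
  proof (intro allI impI)
    fix e :: real assume "e > 0"
    with lim have "eventually (\<lambda>r. osc f lam r < e) F"
      by (rule order_tendstoD(2))
    then show "eventually (\<lambda>r. \<forall>t\<in>{lam*r..1*r}. \<forall>s\<in>{lam*r..1*r}. cmod (f t - f s) < e) F"
      using pos
    proof eventually_elim
      case (elim r)
      then have "0 < lam*r" using \<open>0 < lam\<close> by simp
      show ?case
      proof (intro ballI)
        fix t s assume "t \<in> {lam*r..1*r}" and "s \<in> {lam*r..1*r}"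
        then have "cmod (f t - f s) \<le> osc f lam r"
          using osc_upper[OF assms(1) \<open>0 < lam*r\<close>] by simp
        then show "cmod (f t - f s) < e" using elim(1) by linarith
      qed
    qed
  qed
next
  assume van: "vanishing_oscillation F f lam 1"
  show "((\<lambda>r. osc f lam r) \<longlongrightarrow> 0) F"
  proof (rule tendstoI)
    fix e :: real assume "e > 0"
    then have "e/2 > 0" by simp
    with van have "eventually (\<lambda>r. \<forall>t\<in>{lam*r..1*r}. \<forall>s\<in>{lam*r..1*r}. cmod (f t - f s) < e/2) F"
      unfolding vanishing_oscillation_def by blast
    then show "eventually (\<lambda>r. dist (osc f lam r) 0 < e) F"
      using pos
    proof eventually_elim
      case (elim r)
      have "0 < lam*r" using elim(2) \<open>0 < lam\<close> by simp
      have "lam*r \<le> r" using elim(2) \<open>lam < 1\<close> by (simp add: mult_left_le_one_le)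
      have "0 \<le> osc f lam r"
        using osc_upper[OF assms(1) \<open>0 < lam*r\<close>, of r r] \<open>lam*r \<le> r\<close> by simp
      moreover have "osc f lam r \<le> e/2"
      proof (rule osc_leI[OF \<open>lam*r \<le> r\<close>])
        fix t s assume "t \<in> {lam*r..r}" and "s \<in> {lam*r..r}"
        then have "cmod (f t - f s) < e/2" using elim(1) by simp
        then show "cmod (f t - f s) \<le> e/2" by simp
      qed
      ultimately show ?case using \<open>e > 0\<close> by simp
    qed
  qed
qed

lemma vanishing_oscillation_dilate:
  assumes "vanishing_oscillation F f a b" and "filterlim (\<lambda>r. k*r) F F"
  shows "vanishing_oscillation F f (k*a) (k*b)"
  unfolding vanishing_oscillation_def
proof (intro allI impI)
  fix e :: real assume "e > 0"
  with assms have "eventually (\<lambda>r. \<forall>t\<in>{a*(k*r)..b*(k*r)}. \<forall>s\<in>{a*(k*r)..b*(k*r)}. cmod (f t - f s) < e) F"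
    unfolding vanishing_oscillation_def filterlim_iff by blast
  then show "eventually (\<lambda>r. \<forall>t\<in>{k*a*r..k*b*r}. \<forall>s\<in>{k*a*r..k*b*r}. cmod (f t - f s) < e) F"
    by (simp add: mult.assoc mult.left_commute)
qed

lemma eventually_pos_at_ends:
  assumes "F \<in> {at_right 0, at_top}"
  shows "eventually (\<lambda>r::real. r > 0) F"
  using assms eventually_at_right_less eventually_gt_at_top by auto

lemma filterlim_mult_const_at_ends:
  assumes "F \<in> {at_right 0, at_top}" and "0 < k"
  shows "filterlim (\<lambda>r::real. k*r) F F"
proof (cases "F = at_top")
  case True
  then show ?thesis
    using filterlim_tendsto_pos_mult_at_top[OF tendsto_const \<open>0 < k\<close> filterlim_ident] by simp
next
  case False
  then have F: "F = at_right 0" using assms(1) by simp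
  have "((\<lambda>r. k*r) \<longlongrightarrow> 0) (at_right (0::real))"
    by (auto intro!: tendsto_eq_intros)
  moreover have "eventually (\<lambda>r. k*r \<in> {0<..} \<and> k*r \<noteq> 0) (at_right (0::real))"
    using eventually_at_right_less[of "0::real"] by eventually_elim (use \<open>0 < k\<close> in simp)
  ultimately show ?thesis unfolding F filterlim_at by simp
qed

lemma SO_iff_vanishing_oscillation:
  "SO f \<longleftrightarrow> Cb f \<and>
     (\<forall>F\<in>{at_right 0, at_top}. \<forall>a b. 0 < a \<and> a < b \<longrightarrow> vanishing_oscillation F f a b)"
  (is "_ \<longleftrightarrow> _ \<and> ?van")
proof -
  have lim_iff: "((\<lambda>r. osc f lam r) \<longlongrightarrow> 0) F \<longleftrightarrow> vanishing_oscillation F f lam 1"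
    if "Cb f" "0 < lam" "lam < 1" "F \<in> {at_right 0, at_top}" for lam and F :: "real filter"
    using that eventually_pos_at_ends
    by (intro tendsto_osc_zero_iff_vanishing_oscillation) (auto simp: Cb_def)
  have dilate: "vanishing_oscillation F f a b"
    if "F \<in> {at_right 0, at_top}" "0 < a" "a < b" "vanishing_oscillation F f (a/b) 1"
    for F :: "real filter" and a b :: real
    using vanishing_oscillation_dilate[OF that(4) filterlim_mult_const_at_ends[OF that(1), of b]] that(2,3)
    by simp
  show ?thesis
  proof
    assume SO: "SO f"
    then have "Cb f" unfolding SO_def by blast
    moreover have "vanishing_oscillation F f a b"
      if "F \<in> {at_right 0, at_top}" "0 < a \<and> a < b" for F :: "real filter" and a b :: real
      using that SO lim_iff[OF \<open>Cb f\<close>, of "a/b" F] unfolding SO_def by (auto intro: dilate)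
    ultimately show "Cb f \<and> ?van" by blast
  next
    assume "Cb f \<and> ?van"
    then show "SO f" unfolding SO_def using lim_iff by auto
  qed
qed

lemma vanishing_oscillation_comp:
  assumes van: "vanishing_oscillation F c (m*a) (M*b)" and pos: "eventually (\<lambda>r. r > 0) F"
    and "0 < a" and "0 \<le> m" and bounds: "\<And>t. t > 0 \<Longrightarrow> m*t \<le> \<alpha> t \<and> \<alpha> t \<le> M*t"
  shows "vanishing_oscillation F (c \<circ> \<alpha>) a b"
  unfolding vanishing_oscillation_def
proof (intro allI impI)
  fix e :: real assume "e > 0"
  have into: "\<alpha> t \<in> {m*a*r..M*b*r}" if "r > 0" and t: "t \<in> {a*r..b*r}" for r t
  proof -
    have "t > 0" using t \<open>0 < a\<close> \<open>r > 0\<close> by (auto intro: less_le_trans[of 0 "a*r"])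
    then have "m \<le> M" using bounds[of t] by (meson order.trans mult_le_cancel_right_pos)
    then have "m*(a*r) \<le> m*t" "M*t \<le> M*(b*r)"
      using t \<open>0 \<le> m\<close> by (auto intro: mult_left_mono)
    then show ?thesis using bounds[OF \<open>t > 0\<close>] by (simp add: ac_simps)
  qed
  have "eventually (\<lambda>r. \<forall>t\<in>{m*a*r..M*b*r}. \<forall>s\<in>{m*a*r..M*b*r}. cmod (c t - c s) < e) F"
    using van \<open>e > 0\<close> unfolding vanishing_oscillation_def by blast
  with pos show "eventually (\<lambda>r. \<forall>t\<in>{a*r..b*r}. \<forall>s\<in>{a*r..b*r}. cmod ((c \<circ> \<alpha>) t - (c \<circ> \<alpha>) s) < e) F"
  proof eventually_elim
    case (elim r)
    show ?case
      using elim(2) into[OF elim(1)] by (intro ballI) simp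
  qed
qed

lemma tendsto_diff_comp_zero:
  assumes van: "vanishing_oscillation F c a b" and pos: "eventually (\<lambda>r. r > 0) F"
    and near: "\<And>t. t > 0 \<Longrightarrow> t \<in> {a*t..b*t} \<and> \<alpha> t \<in> {a*t..b*t}"
  shows "((\<lambda>t. c t - c (\<alpha> t)) \<longlongrightarrow> 0) F"
proof (rule tendstoI)
  fix e :: real assume "e > 0"
  with van have "eventually (\<lambda>r. \<forall>t\<in>{a*r..b*r}. \<forall>s\<in>{a*r..b*r}. cmod (c t - c s) < e) F"
    unfolding vanishing_oscillation_def by blast
  with pos show "eventually (\<lambda>t. dist (c t - c (\<alpha> t)) 0 < e) F"
    by eventually_elim (use near in force)
qed

lemma Cb_comp:
  assumes "Cb c" and "continuous_on {0<..} \<alpha>" and "\<alpha> ` {0<..} \<subseteq> {0<..}"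
  shows "Cb (c \<circ> \<alpha>)"
  using assms unfolding Cb_def
  by (metis bounded_subset continuous_on_compose continuous_on_subset image_comp image_mono)

lemma Cb_diff:
  assumes "Cb f" and "Cb g"
  shows "Cb (\<lambda>t. f t - g t)"
  using assms unfolding Cb_def by (simp add: continuous_on_diff bounded_minus_comp)

lemma tendsto_zero_at_right_if_strict_mono_onto:
  fixes \<alpha> :: "real \<Rightarrow> real"
  assumes bij: "bij_betw \<alpha> {0<..} {0<..}" and mono: "strict_mono_on {0<..} \<alpha>"
  shows "(\<alpha> \<longlongrightarrow> 0) (at_right 0)"
proof (rule tendstoI)
  fix e :: real assume "e > 0"
  then obtain s where "s > 0" and "\<alpha> s = e"
    using bij unfolding bij_betw_def by (metis greaterThan_iff imageE)
  have "eventually (\<lambda>t. 0 < t \<and> t < s) (at_right 0)"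
    using \<open>s > 0\<close> eventually_at_right_field by blast
  then show "eventually (\<lambda>t. dist (\<alpha> t) 0 < e) (at_right 0)"
  proof eventually_elim
    case (elim t)
    then have "0 < \<alpha> t" using bij unfolding bij_betw_def by auto
    moreover have "\<alpha> t < e"
      using mono elim \<open>\<alpha> s = e\<close> unfolding strict_mono_on_def by auto
    ultimately show ?case by simp
  qed
qed

lemma linear_bounds_if_deriv_bounds:
  fixes \<alpha> \<alpha>' :: "real \<Rightarrow> real"
  assumes der: "\<And>t. t > 0 \<Longrightarrow> (\<alpha> has_real_derivative \<alpha>' t) (at t)"
    and bounds: "\<And>t. t > 0 \<Longrightarrow> m \<le> \<alpha>' t \<and> \<alpha>' t \<le> M"
    and lim: "(\<alpha> \<longlongrightarrow> 0) (at_right 0)" and "t > 0"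
  shows "m*t \<le> \<alpha> t \<and> \<alpha> t \<le> M*t"
proof -
  have increment: "m*(t-s) \<le> \<alpha> t - \<alpha> s \<and> \<alpha> t - \<alpha> s \<le> M*(t-s)" if "0 < s" "s < t" for s
  proof -
    have "\<forall>x. s \<le> x \<and> x \<le> t \<longrightarrow> (\<alpha> has_real_derivative \<alpha>' x) (at x)"
      using der \<open>0 < s\<close> by simp
    then obtain z where "s < z" "z < t" "\<alpha> t - \<alpha> s = (t - s) * \<alpha>' z"
      using MVT2[OF \<open>s < t\<close>] by blast
    then show ?thesis
      using bounds[of z] that by (simp add: mult_right_mono mult.commute)
  qed
  have "eventually (\<lambda>s. m*(t-s) \<le> \<alpha> t - \<alpha> s \<and> \<alpha> t - \<alpha> s \<le> M*(t-s)) (at_right 0)"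
    unfolding eventually_at_right_field using \<open>t > 0\<close> increment by blast
  then have lower: "eventually (\<lambda>s. m*(t-s) \<le> \<alpha> t - \<alpha> s) (at_right 0)"
    and upper: "eventually (\<lambda>s. \<alpha> t - \<alpha> s \<le> M*(t-s)) (at_right 0)"
    by (simp_all add: eventually_conj_iff)
  have lim_diff: "((\<lambda>s. \<alpha> t - \<alpha> s) \<longlongrightarrow> \<alpha> t - 0) (at_right 0)"
    by (intro tendsto_intros lim)
  have "m*(t-0) \<le> \<alpha> t - 0"
    by (rule tendsto_le[OF trivial_limit_at_right_real lim_diff _ lower]) (intro tendsto_intros)
  moreover have "\<alpha> t - 0 \<le> M*(t-0)"
    by (rule tendsto_le[OF trivial_limit_at_right_real _ lim_diff upper]) (intro tendsto_intros)
  ultimately show ?thesis by simp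
qed

lemma SOS_deriv_pos:
  assumes "SOS \<alpha>" and t: "t > 0"
  shows "deriv \<alpha> t > 0"
proof -
  have bij: "bij_betw \<alpha> {0<..} {0<..}" and mono: "strict_mono_on {0<..} \<alpha>"
    and der: "DERIV \<alpha> t :> deriv \<alpha> t"
    using assms unfolding SOS_def DERIV_deriv_iff_real_differentiable by auto
  have "\<alpha> t > 0" using bij t by (auto dest: bij_betwE)
  then have inv_diff: "inv_into {0<..} \<alpha> differentiable (at (\<alpha> t))"
    using assms unfolding SOS_def by blast
  have "deriv \<alpha> t \<ge> 0"
  proof (rule ccontr)
    assume "\<not> deriv \<alpha> t \<ge> 0"
    then obtain d where "d > 0" "\<forall>h>0. h < d \<longrightarrow> \<alpha> (t + h) < \<alpha> t"
      using DERIV_neg_dec_right[OF der] by force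
    then have "\<alpha> (t + d/2) < \<alpha> t" by simp
    moreover have "\<alpha> t < \<alpha> (t + d/2)" using mono t \<open>d > 0\<close> unfolding strict_mono_on_def by simp
    ultimately show False by simp
  qed
  moreover have "deriv \<alpha> t \<noteq> 0"
  proof
    let ?g = "inv_into {0<..} \<alpha>"
    assume "deriv \<alpha> t = 0"
    have "DERIV (?g \<circ> \<alpha>) t :> deriv ?g (\<alpha> t) * deriv \<alpha> t"
      using inv_diff der DERIV_deriv_iff_real_differentiable by (blast intro: DERIV_chain)
    moreover have "DERIV (?g \<circ> \<alpha>) t :> 1"
    proof (rule has_field_derivative_transform_within_open[of "\<lambda>x. x" _ _ "{0<..}"])
      show "x = (?g \<circ> \<alpha>) x" if "x \<in> {0<..}" for x
        using bij_betw_inv_into_left[OF bij that] by simp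
    qed (use t in auto)
    ultimately show False using \<open>deriv \<alpha> t = 0\<close> DERIV_unique by fastforce
  qed
  ultimately show ?thesis by simp
qed

text \<open>\<open>ln\<close> is \<open>0\<close> on non-positive arguments, so the boundedness of \<open>ln \<alpha>'\<close> yields bounds for \<open>\<alpha>'\<close>
  only together with \<open>SOS_deriv_pos\<close>.\<close>

lemma SOS_linear_bounds:
  assumes "SOS \<alpha>"
  obtains m M where "0 < m" and "\<And>t. t > 0 \<Longrightarrow> m*t \<le> \<alpha> t \<and> \<alpha> t \<le> M*t"
proof -
  have "bounded ((\<lambda>t. complex_of_real (ln (deriv \<alpha> t))) ` {0<..})"
    using assms unfolding SOS_def Cb_def by blast
  then obtain L where L: "\<And>t. t > 0 \<Longrightarrow> \<bar>ln (deriv \<alpha> t)\<bar> \<le> L"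
    unfolding bounded_iff by auto
  have der: "DERIV \<alpha> t :> deriv \<alpha> t" if "t > 0" for t
    using assms that unfolding SOS_def DERIV_deriv_iff_real_differentiable by blast
  have deriv_bounds: "exp (-L) \<le> deriv \<alpha> t \<and> deriv \<alpha> t \<le> exp L" if "t > 0" for t
    using L[OF that] SOS_deriv_pos[OF assms that]
    by (metis abs_le_iff exp_le_cancel_iff exp_ln minus_le_iff)
  have lim: "(\<alpha> \<longlongrightarrow> 0) (at_right 0)"
    using assms unfolding SOS_def by (blast intro: tendsto_zero_at_right_if_strict_mono_onto)
  have "exp (-L) * t \<le> \<alpha> t \<and> \<alpha> t \<le> exp L * t" if "t > 0" for t
    by (rule linear_bounds_if_deriv_bounds[OF der deriv_bounds lim that])
  then show ?thesis using that[of "exp (-L)" "exp L"] by simp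
qed

lemma SOS_continuous_on: "SOS \<alpha> \<Longrightarrow> continuous_on {0<..} \<alpha>"
  unfolding SOS_def
  by (intro continuous_at_imp_continuous_on ballI differentiable_imp_continuous_within) simp

lemma SO_comp_linearly_bounded:
  assumes "SO c" and "continuous_on {0<..} \<alpha>" and "0 < m"
    and bounds: "\<And>t. t > 0 \<Longrightarrow> m*t \<le> \<alpha> t \<and> \<alpha> t \<le> M*t"
  shows "SO (c \<circ> \<alpha>)"
  unfolding SO_iff_vanishing_oscillation
proof (intro conjI ballI allI impI)
  have "Cb c" and van: "\<And>F a b. F \<in> {at_right 0, at_top} \<Longrightarrow> 0 < a \<Longrightarrow> a < b \<Longrightarrow>
      vanishing_oscillation F c a b"
    using assms(1) unfolding SO_iff_vanishing_oscillation by blast+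
  have "\<alpha> t > 0" if "t > 0" for t
    using bounds[OF that] mult_pos_pos[OF \<open>0 < m\<close> that] by linarith
  then show "Cb (c \<circ> \<alpha>)"
    using \<open>Cb c\<close> assms(2) by (intro Cb_comp) auto
  fix F :: "real filter" and a b :: real
  assume F: "F \<in> {at_right 0, at_top}" and ab: "0 < a \<and> a < b"
  have "m \<le> M" using bounds[of 1] by simp
  have "0 < m*a" using ab \<open>0 < m\<close> by simp
  have "m*a < m*b" using ab \<open>0 < m\<close> by simp
  also have "\<dots> \<le> M*b" using ab \<open>m \<le> M\<close> by (simp add: mult_right_mono)
  finally have "vanishing_oscillation F c (m*a) (M*b)"
    using van[OF F \<open>0 < m*a\<close>] by blast
  then show "vanishing_oscillation F (c \<circ> \<alpha>) a b"
    using ab \<open>0 < m\<close> by (intro vanishing_oscillation_comp[OF _ eventually_pos_at_ends[OF F] _ _ bounds]) simp_all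
qed

lemma tendsto_diff_comp_zero_at_ends:
  assumes "SO c" and "0 < m"
    and bounds: "\<And>t. t > 0 \<Longrightarrow> m*t \<le> \<alpha> t \<and> \<alpha> t \<le> M*t"
    and F: "F \<in> {at_right 0, at_top}"
  shows "((\<lambda>t. c t - c (\<alpha> t)) \<longlongrightarrow> 0) F"
proof (rule tendsto_diff_comp_zero)
  let ?a = "min 1 m / 2" and ?b = "max 1 M"
  have "0 < ?a" "?a < ?b" using \<open>0 < m\<close> by auto
  then show "vanishing_oscillation F c ?a ?b"
    using assms(1) F unfolding SO_iff_vanishing_oscillation by blast
  show "eventually (\<lambda>r. r > 0) F" using F by (rule eventually_pos_at_ends)
  fix t :: real assume "t > 0"
  then have "?a*t \<le> 1*t" "?a*t \<le> m*t" "1*t \<le> ?b*t" "M*t \<le> ?b*t"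
    using \<open>0 < m\<close> by (intro mult_right_mono; simp)+
  then show "t \<in> {?a*t..?b*t} \<and> \<alpha> t \<in> {?a*t..?b*t}"
    using bounds[OF \<open>t > 0\<close>] unfolding atLeastAtMost_iff mult_1 by linarith
qed

theorem lemma2p3:
  fixes c :: "real \<Rightarrow> complex" and \<alpha> :: "real \<Rightarrow> real"
  assumes "SO c" and "SOS \<alpha>"
  shows "SO (c \<circ> \<alpha>) \<and>
         Cb (\<lambda>t. c t - c (\<alpha> t)) \<and>
         ((\<lambda>t. c t - c (\<alpha> t)) \<longlongrightarrow> 0) (at_right 0) \<and>
         ((\<lambda>t. c t - c (\<alpha> t)) \<longlongrightarrow> 0) at_top"
proof -
  obtain m M where "0 < m" and bounds: "\<And>t. t > 0 \<Longrightarrow> m*t \<le> \<alpha> t \<and> \<alpha> t \<le> M*t"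
    using SOS_linear_bounds[OF assms(2)] by blast
  have SO_comp: "SO (c \<circ> \<alpha>)"
    using assms \<open>0 < m\<close> bounds by (intro SO_comp_linearly_bounded SOS_continuous_on)
  then have "Cb (\<lambda>t. c t - c (\<alpha> t))"
    using Cb_diff[of c "c \<circ> \<alpha>"] assms(1) unfolding SO_def by (simp add: o_def)
  moreover have "((\<lambda>t. c t - c (\<alpha> t)) \<longlongrightarrow> 0) F" if "F \<in> {at_right 0, at_top}" for F
    using assms(1) \<open>0 < m\<close> bounds that by (rule tendsto_diff_comp_zero_at_ends)
  ultimately show ?thesis using SO_comp by simp
qed

end
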